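(* Let $p\geq 3$ be a prime, $u\in\{2,\ldots,p-1\}$ and $s$ a positive integer. Then $$\nu_{p}\big(A_{p,(p-1)(up^s-1)}(n)\big)\geq 2$$ for infinitely many $n\in\mathbb{N}$.
   Context: For an integer $m\geq 2$ and a positive integer $k$, the integers $A_{m,k}(n)$, $n\in\mathbb{N}=\{0,1,2,\ldots\}$, are defined by the formal power series identity $\prod_{i=0}^{\infty}\big(1-x^{m^{i}}\big)^{-k}=\sum_{n=0}^{\infty}A_{m,k}(n)x^{n}$. For a prime $p$, $\nu_p(n)$ denotes the $p$-adic valuation of the integer $n$, with $\nu_p(0)=+\infty$. *)

theory Defs
  imports "HOL-Computational_Algebra.Computational_Algebra" "HOL-Library.Extended_Nat"
begin

text \<open>Coefficients A_{m,k}(n) of prod_{i>=0} (1 - x^(m^i))^(-k).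
  For m >= 2 and i > n we have m^i > n, so the factor with index i is
  congruent to 1 modulo x^(n+1); hence the n-th coefficient of the infinite
  product equals the n-th coefficient of the finite product over i <= n.\<close>
definition geom :: "nat \<Rightarrow> int fps" where
  "geom a = Abs_fps (\<lambda>n. if a dvd n then 1 else 0)"

lemma geom_inverse:
  assumes "a \<ge> 1" shows "geom a * (1 - fps_X ^ a) = 1"
proof (rule fps_ext)
  fix n
  show "fps_nth (geom a * (1 - fps_X ^ a)) n = fps_nth 1 n"
    using assms
    by (auto simp: geom_def algebra_simps fps_X_power_mult_nth dvd_diff_nat dvd_minus_self
             dest: dvd_imp_le)
qed

definition A :: "nat \<Rightarrow> nat \<Rightarrow> nat \<Rightarrow> int" where
  "A m k n = fps_nth (\<Prod>i\<le>n. (geom (m ^ i)) ^ k) n"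

definition nu :: "nat \<Rightarrow> int \<Rightarrow> enat" where
  "nu p x = (if x = 0 then \<infinity> else enat (multiplicity (int p) x))"

end

(*
  Let G = prod_i 1/(1 - x^(p^i)) and P = prod_i (1 - x^(p^i)), so that A_{p,k}(n) is the n-th
  coefficient of G^k. The Frobenius congruence (1 - x^a)^p = 1 - x^(ap) (mod p) gives
  G^(p-1) = 1 - x (mod p) in low degrees; as p divides w = u p^s, raising this to the w-th power
  lifts it to G^((p-1)w) = (1 - x)^w (mod p^2), whence A_{p,(p-1)(w-1)}(n) = [x^n] (1 - x)^w P^(p-1)
  (mod p^2). The coefficient of x^m in P^(p-1) is the product, over the base-p digits d of m, of
  (-1)^d binom(p-1, d) = 1 - p H_d (mod p^2), and (1 - x)^w = (1 - x^(p^s))^u (mod p). Hence for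
  n = p^s q, p^2 divides A(n) as soon as the u-th backward difference at q of the digit sums of
  harmonic numbers vanishes modulo p. For q = p^e + p a + t this difference is, by
  H_(p-j) = H_(j-1) (mod p), an affine function of 1/a modulo p, and with t = 0 or t = 1 it can be
  made to vanish by the choice of the digit a; every e >= 2 then gives one such n.
*)

theory Submission
  imports Defs
begin

section \<open>\<open>p\<close>-integral rationals\<close>

text \<open>A congruence \<open>x \<equiv> y (mod p^k)\<close> between \<open>p\<close>-integral rationals is stated as
  \<open>p_multiple p k (x - y)\<close>.\<close>

definition p_integral :: "nat \<Rightarrow> rat \<Rightarrow> bool" where
  "p_integral p r \<longleftrightarrow> (\<exists>a b::int. b \<noteq> 0 \<and> coprime b (int p) \<and> r = of_int a / of_int b)"

definition p_multiple :: "nat \<Rightarrow> nat \<Rightarrow> rat \<Rightarrow> bool" where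
  "p_multiple p k r \<longleftrightarrow> (\<exists>z. p_integral p z \<and> r = of_nat p ^ k * z)"

lemma p_integral_of_int [simp]: "p_integral p (of_int a)"
  unfolding p_integral_def by (intro exI[of _ a] exI[of _ 1]) simp

lemma p_integral_of_nat [simp]: "p_integral p (of_nat a)"
  using p_integral_of_int[of p "int a"] by simp

lemma p_integral_0 [simp]: "p_integral p 0" and p_integral_1 [simp]: "p_integral p 1"
  using p_integral_of_int[of p 0] p_integral_of_int[of p 1] by simp_all

lemma p_integral_add [intro]:
  assumes "p_integral p x" "p_integral p y" shows "p_integral p (x + y)"
proof -
  obtain a b c d where "b \<noteq> 0" "coprime b (int p)" "x = of_int a / of_int b"
    "d \<noteq> 0" "coprime d (int p)" "y = of_int c / of_int d"
    using assms unfolding p_integral_def by blast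
  then have "x + y = of_int (a * d + c * b) / of_int (b * d)" "b * d \<noteq> 0" "coprime (b * d) (int p)"
    by (simp_all add: field_simps)
  then show ?thesis unfolding p_integral_def by blast
qed

lemma p_integral_mult [intro]:
  assumes "p_integral p x" "p_integral p y" shows "p_integral p (x * y)"
proof -
  obtain a b c d where "b \<noteq> 0" "coprime b (int p)" "x = of_int a / of_int b"
    "d \<noteq> 0" "coprime d (int p)" "y = of_int c / of_int d"
    using assms unfolding p_integral_def by blast
  then have "x * y = of_int (a * c) / of_int (b * d)" "b * d \<noteq> 0" "coprime (b * d) (int p)"
    by simp_all
  then show ?thesis unfolding p_integral_def by blast
qed

lemma p_integral_diff [intro]:
  assumes "p_integral p x" "p_integral p y" shows "p_integral p (x - y)"
  using p_integral_add[OF assms(1) p_integral_mult[OF p_integral_of_int[of p "-1"] assms(2)]] by simp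

lemma p_integral_sum [intro]:
  "(\<And>i. i \<in> S \<Longrightarrow> p_integral p (f i)) \<Longrightarrow> p_integral p (\<Sum>i\<in>S. f i)"
  by (induction S rule: infinite_finite_induct) auto

lemma coprime_less_prime:
  "prime p \<Longrightarrow> 0 < k \<Longrightarrow> k < p \<Longrightarrow> coprime (int k) (int p)"
  by (metis coprime_commute coprime_int_iff nat_dvd_not_less prime_imp_coprime)

lemma p_integral_inverse_of_nat:
  assumes "prime p" "0 < k" "k < p" shows "p_integral p (1 / of_nat k)"
  unfolding p_integral_def using assms coprime_less_prime[OF assms]
  by (intro exI[of _ 1] exI[of _ "int k"]) auto

lemma p_multiple_zero [simp]: "p_multiple p k 0"
  unfolding p_multiple_def by (intro exI[of _ 0]) simp

lemma p_multiple_add [intro]: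
  assumes "p_multiple p k x" "p_multiple p k y" shows "p_multiple p k (x + y)"
proof -
  obtain z w where "p_integral p z" "x = of_nat p ^ k * z" "p_integral p w" "y = of_nat p ^ k * w"
    using assms unfolding p_multiple_def by blast
  then show ?thesis unfolding p_multiple_def by (intro exI[of _ "z + w"]) (auto simp: distrib_left)
qed

lemma p_multiple_mult_right [intro]:
  assumes "p_multiple p k x" "p_integral p y" shows "p_multiple p k (x * y)"
proof -
  obtain z where "p_integral p z" "x = of_nat p ^ k * z"
    using assms unfolding p_multiple_def by blast
  then show ?thesis unfolding p_multiple_def using assms(2) by (intro exI[of _ "z * y"]) auto
qed

lemma p_multiple_mult_left [intro]:
  "p_integral p y \<Longrightarrow> p_multiple p k x \<Longrightarrow> p_multiple p k (y * x)"
  using p_multiple_mult_right[of p k x y] by (simp add: mult.commute)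

lemma p_multiple_uminus [intro]: "p_multiple p k x \<Longrightarrow> p_multiple p k (- x)"
  using p_multiple_mult_right[of p k x "-1"] p_integral_of_int[of p "-1"] by simp

lemma p_multiple_diff [intro]: "p_multiple p k x \<Longrightarrow> p_multiple p k y \<Longrightarrow> p_multiple p k (x - y)"
  using p_multiple_add[of p k x "- y"] by auto

lemma p_multiple_sum [intro]:
  "(\<And>i. i \<in> S \<Longrightarrow> p_multiple p k (f i)) \<Longrightarrow> p_multiple p k (\<Sum>i\<in>S. f i)"
  by (induction S rule: infinite_finite_induct) auto

lemma p_multiple_Suc: "p_multiple p k x \<Longrightarrow> p_multiple p (Suc k) (of_nat p * x)"
  unfolding p_multiple_def by auto

lemma p_multiple_of_nat_mult: "p_integral p x \<Longrightarrow> p_multiple p 1 (of_nat p * x)"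
  unfolding p_multiple_def by auto

lemma p_multiple_of_nat_mult_of_nat_mult:
  "p_integral p x \<Longrightarrow> p_multiple p 2 (of_nat p * (of_nat p * x))"
  unfolding p_multiple_def by (auto simp: power2_eq_square)

lemma p_multiple_of_int_iff:
  assumes "prime p" shows "p_multiple p k (of_int a) \<longleftrightarrow> int p ^ k dvd a"
proof
  assume "p_multiple p k (of_int a)"
  then obtain c b where "b \<noteq> 0" "coprime b (int p)" "of_int a = of_nat p ^ k * (of_int c / of_int b :: rat)"
    unfolding p_multiple_def p_integral_def by blast
  then have "of_int (a * b) = (of_int (int p ^ k * c) :: rat)"
    by (simp add: field_simps)
  then have "a * b = int p ^ k * c" by (simp only: of_int_eq_iff)
  moreover have "coprime (int p ^ k) b" using \<open>coprime b (int p)\<close> by (simp add: coprime_commute)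
  ultimately show "int p ^ k dvd a"
    using coprime_dvd_mult_left_iff by (metis dvd_triv_left)
next
  assume "int p ^ k dvd a"
  then obtain c where "a = int p ^ k * c" by blast
  then show "p_multiple p k (of_int a)"
    unfolding p_multiple_def by (intro exI[of _ "of_int c"]) simp
qed

lemma not_p_multiple_of_nat:
  assumes "prime p" "0 < k" "k < p" shows "\<not> p_multiple p 1 (of_nat k)"
  using p_multiple_of_int_iff[OF assms(1), of 1 "int k"] nat_dvd_not_less[OF assms(2,3)] by simp

section \<open>Harmonic numbers and signed binomial coefficients\<close>

definition harmonic :: "nat \<Rightarrow> rat" where
  "harmonic n = (\<Sum>k=1..n. 1 / of_nat k)"

lemma harmonic_0 [simp]: "harmonic 0 = 0"
  by (simp add: harmonic_def)

lemma harmonic_Suc: "harmonic (Suc n) = harmonic n + 1 / of_nat (Suc n)"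
  by (simp add: harmonic_def)

lemma p_integral_harmonic: "prime p \<Longrightarrow> n < p \<Longrightarrow> p_integral p (harmonic n)"
  unfolding harmonic_def by (intro p_integral_sum) (auto intro!: p_integral_inverse_of_nat)

lemma p_multiple_inverse_pair:
  assumes "prime p" "0 < j" "j < p"
  shows "p_multiple p 1 (1 / of_nat (p - j) + 1 / of_nat j)"
proof -
  have "1 / of_nat (p - j) + 1 / of_nat j = of_nat p * (1 / of_nat (p - j) * (1 / of_nat j) :: rat)"
    using assms by (simp add: field_simps)
  moreover have "p_integral p (1 / of_nat (p - j) * (1 / of_nat j))"
    using assms by (intro p_integral_mult p_integral_inverse_of_nat) auto
  ultimately show ?thesis
    by (simp only: p_multiple_of_nat_mult)
qed

lemma p_multiple_harmonic_complement:
  assumes "prime p" "1 \<le> j" "j \<le> p"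
  shows "p_multiple p 1 (harmonic (p - 1) - harmonic (p - j) + harmonic (j - 1))"
  using assms(2,3)
proof (induction j rule: nat_induct_at_least)
  case (Suc j)
  have "harmonic (p - 1) - harmonic (p - Suc j) + harmonic (Suc j - 1) =
        (harmonic (p - 1) - harmonic (p - j) + harmonic (j - 1)) + (1 / of_nat (p - j) + 1 / of_nat j)"
    using Suc harmonic_Suc[of "p - Suc j"] harmonic_Suc[of "j - 1"] by (simp add: Suc_diff_Suc)
  moreover have "p_multiple p 1 (harmonic (p - 1) - harmonic (p - j) + harmonic (j - 1))"
    using Suc by simp
  moreover have "p_multiple p 1 (1 / of_nat (p - j) + 1 / of_nat j)"
    using Suc assms by (intro p_multiple_inverse_pair) auto
  ultimately show ?case by (simp only: p_multiple_add)
qed simp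

text \<open>The weak form of Wolstenholme's theorem: the pairing reaches the middle at \<open>j = (p + 1)/2\<close>.\<close>

lemma p_multiple_harmonic_pred:
  assumes "prime p" "odd p" shows "p_multiple p 1 (harmonic (p - 1))"
proof -
  define j where "j = (p + 1) div 2"
  have "p - j = j - 1" "1 \<le> j" "j \<le> p" unfolding j_def using assms(2) by (auto elim!: oddE)
  then show ?thesis using p_multiple_harmonic_complement[OF assms(1), of j] by simp
qed

lemma p_multiple_harmonic_reflect:
  assumes "prime p" "odd p" "1 \<le> j" "j \<le> p"
  shows "p_multiple p 1 (harmonic (p - j) - harmonic (j - 1))"
proof -
  have "harmonic (p - j) - harmonic (j - 1) =
        harmonic (p - 1) - (harmonic (p - 1) - harmonic (p - j) + harmonic (j - 1))"
    by simp
  then show ?thesis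
    using p_multiple_harmonic_pred[OF assms(1,2)] p_multiple_harmonic_complement[OF assms(1,3,4)]
    by (metis p_multiple_diff)
qed

definition signed_binom :: "nat \<Rightarrow> nat \<Rightarrow> int" where
  "signed_binom p d = (-1) ^ d * int (p - 1 choose d)"

lemma signed_binom_0 [simp]: "signed_binom p 0 = 1"
  by (simp add: signed_binom_def)

lemma signed_binom_Suc:
  assumes "Suc d \<le> p - 1"
  shows "of_int (signed_binom p (Suc d)) = (of_int (signed_binom p d) :: rat) * (1 - of_nat p / of_nat (Suc d))"
proof -
  have "Suc d * (p - 1 choose Suc d) = (p - 1) * (p - 1 - 1 choose d)"
    by (rule binomial_absorption)
  also have "\<dots> = (p - 1 - d) * (p - 1 choose d)"
    by (rule binomial_absorb_comp[symmetric])
  finally have "Suc d * (p - 1 choose Suc d) = (p - 1 - d) * (p - 1 choose d)" .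
  then have "of_nat (Suc d) * of_nat (p - 1 choose Suc d) = of_nat (p - 1 - d) * (of_nat (p - 1 choose d) :: rat)"
    by (metis of_nat_mult)
  moreover have "of_nat (p - 1 - d) = (of_nat p - of_nat (Suc d) :: rat)"
    using assms by simp
  ultimately have absorb: "of_nat (Suc d) * of_nat (p - 1 choose Suc d) =
      (of_nat p - of_nat (Suc d)) * (of_nat (p - 1 choose d) :: rat)"
    by simp
  have "of_int (signed_binom p (Suc d)) * of_nat (Suc d) =
      - ((-1) ^ d) * (of_nat (Suc d) * (of_nat (p - 1 choose Suc d) :: rat))"
    unfolding signed_binom_def by simp
  also have "\<dots> = of_int (signed_binom p d) * (of_nat (Suc d) - of_nat p)"
    unfolding absorb signed_binom_def by (simp add: algebra_simps)
  finally have "of_int (signed_binom p (Suc d)) * of_nat (Suc d) =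
      of_int (signed_binom p d) * (of_nat (Suc d) - (of_nat p :: rat))" .
  then show ?thesis by (simp add: field_simps del: of_nat_Suc)
qed

text \<open>\<open>(-1)^d binom (p - 1) d = \<Prod>k=1..d. (1 - p/k) \<equiv> 1 - p H(d) (mod p^2)\<close>.\<close>

lemma p_multiple_signed_binom:
  assumes "prime p" "d \<le> p - 1"
  shows "p_multiple p 2 (of_int (signed_binom p d) - (1 - of_nat p * harmonic d))"
  using assms(2)
proof (induction d)
  case (Suc d)
  have inv: "p_integral p (1 / of_nat (Suc d))"
    using Suc assms by (intro p_integral_inverse_of_nat) auto
  have "p_integral p (harmonic d)" using p_integral_harmonic[OF assms(1)] Suc by auto
  then have "p_multiple p 2 (of_nat p * (of_nat p * (harmonic d * (1 / of_nat (Suc d)))))"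
    using inv by (intro p_multiple_of_nat_mult_of_nat_mult p_integral_mult)
  moreover have "p_multiple p 2 ((of_int (signed_binom p d) - (1 - of_nat p * harmonic d)) *
      (1 - of_nat p * (1 / of_nat (Suc d))))"
    using Suc inv by (intro p_multiple_mult_right p_integral_diff p_integral_mult) auto
  moreover have "of_int (signed_binom p (Suc d)) - (1 - of_nat p * harmonic (Suc d)) =
        (of_int (signed_binom p d) - (1 - of_nat p * harmonic d)) * (1 - of_nat p * (1 / of_nat (Suc d)))
         + of_nat p * (of_nat p * (harmonic d * (1 / of_nat (Suc d))))"
    using signed_binom_Suc[OF Suc.prems] harmonic_Suc[of d] by (simp add: field_simps del: of_nat_Suc)
  ultimately show ?case by (metis p_multiple_add)
qed simp

section \<open>Functions of the base-\<open>p\<close> digits\<close>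

fun digit_harmonic :: "nat \<Rightarrow> nat \<Rightarrow> rat" where
  "digit_harmonic p m =
     (if m = 0 \<or> p < 2 then 0 else harmonic (m mod p) + digit_harmonic p (m div p))"

fun digit_signed_binom :: "nat \<Rightarrow> nat \<Rightarrow> int" where
  "digit_signed_binom p m =
     (if m = 0 \<or> p < 2 then 1 else signed_binom p (m mod p) * digit_signed_binom p (m div p))"

declare digit_harmonic.simps [simp del] digit_signed_binom.simps [simp del]

lemma digit_harmonic_eq:
  "p \<ge> 2 \<Longrightarrow> digit_harmonic p m = harmonic (m mod p) + digit_harmonic p (m div p)"
  by (cases "m = 0") (simp_all add: digit_harmonic.simps[of p m] digit_harmonic.simps[of p 0])

lemma digit_signed_binom_eq:
  "p \<ge> 2 \<Longrightarrow> digit_signed_binom p m = signed_binom p (m mod p) * digit_signed_binom p (m div p)"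
  by (cases "m = 0") (simp_all add: digit_signed_binom.simps[of p m] digit_signed_binom.simps[of p 0])

lemma p_integral_digit_harmonic:
  assumes "prime p" shows "p_integral p (digit_harmonic p m)"
proof (induction m rule: less_induct)
  case (less m)
  have "p \<ge> 2" using assms prime_ge_2_nat by auto
  show ?case
  proof (cases "m = 0")
    case False
    then have "p_integral p (digit_harmonic p (m div p))" using less \<open>p \<ge> 2\<close> by simp
    then show ?thesis
      using p_integral_harmonic[OF assms, of "m mod p"] \<open>p \<ge> 2\<close> by (auto simp: digit_harmonic_eq[of p m])
  qed (simp add: digit_harmonic.simps)
qed

lemma p_multiple_digit_signed_binom:
  assumes "prime p"
  shows "p_multiple p 2 (of_int (digit_signed_binom p m) - (1 - of_nat p * digit_harmonic p m))"
proof (induction m rule: less_induct)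
  case (less m)
  have p2: "p \<ge> 2" using assms prime_ge_2_nat by auto
  show ?case
  proof (cases "m = 0")
    case False
    define r q where "r = m mod p" and "q = m div p"
    have "r \<le> p - 1" using p2 unfolding r_def by (simp add: less_Suc_eq_le[symmetric])
    have IH: "p_multiple p 2 (of_int (digit_signed_binom p q) - (1 - of_nat p * digit_harmonic p q))"
      using less p2 False unfolding q_def by simp
    have r: "p_multiple p 2 (of_int (signed_binom p r) - (1 - of_nat p * harmonic r))"
      using p_multiple_signed_binom[OF assms \<open>r \<le> p - 1\<close>] .
    have Hr: "p_integral p (harmonic r)" using p_integral_harmonic[OF assms] \<open>r \<le> p - 1\<close> p2 by simp
    have Hq: "p_integral p (digit_harmonic p q)" using p_integral_digit_harmonic[OF assms] .
    have split: "of_int (digit_signed_binom p m) - (1 - of_nat p * digit_harmonic p m) =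
      (of_int (signed_binom p r) - (1 - of_nat p * harmonic r)) * of_int (digit_signed_binom p q)
      + (1 - of_nat p * harmonic r) * (of_int (digit_signed_binom p q) - (1 - of_nat p * digit_harmonic p q))
      + of_nat p * (of_nat p * (harmonic r * digit_harmonic p q))"
      using digit_signed_binom_eq[OF p2, of m] digit_harmonic_eq[OF p2, of m]
      unfolding r_def[symmetric] q_def[symmetric] by (simp add: algebra_simps)
    have "p_integral p (1 - of_nat p * harmonic r)"
      using Hr by (intro p_integral_diff p_integral_mult) simp_all
    then show ?thesis
      unfolding split using r IH Hr Hq
      by (intro p_multiple_add p_multiple_mult_right[OF r] p_multiple_mult_left[OF _ IH]
          p_multiple_of_nat_mult_of_nat_mult p_integral_mult) simp_all
  qed (simp add: digit_signed_binom.simps digit_harmonic.simps)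
qed

lemma digit_signed_binom_mod_div:
  assumes "p \<ge> 2"
  shows "digit_signed_binom p m = digit_signed_binom p (m mod p ^ L) * digit_signed_binom p (m div p ^ L)"
proof (induction L arbitrary: m)
  case (Suc L)
  have low: "(m mod p ^ Suc L) mod p = m mod p" "(m mod p ^ Suc L) div p = m div p mod p ^ L"
    using assms by (simp_all add: mod_mod_cancel mod_mult2_eq)
  have high: "m div p ^ Suc L = m div p div p ^ L"
    by (simp add: div_mult2_eq)
  have "digit_signed_binom p m = signed_binom p (m mod p) *
      (digit_signed_binom p (m div p mod p ^ L) * digit_signed_binom p (m div p div p ^ L))"
    using digit_signed_binom_eq[OF assms, of m] Suc.IH[of "m div p"] by simp
  also have "\<dots> = digit_signed_binom p (m mod p ^ Suc L) * digit_signed_binom p (m div p ^ Suc L)"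
    unfolding digit_signed_binom_eq[OF assms, of "m mod p ^ Suc L"] low high by simp
  finally show ?case .
qed (simp add: digit_signed_binom.simps)

lemma digit_harmonic_mult_power: "p \<ge> 2 \<Longrightarrow> digit_harmonic p (p ^ s * m) = digit_harmonic p m"
  by (induction s) (simp_all add: mult.assoc digit_harmonic_eq[of p "p * _"])

lemma digit_harmonic_three_digits:
  assumes "p \<ge> 2" "a \<ge> 2" "b < p" "e < p"
  shows "digit_harmonic p (p ^ a + p * b + e) = 1 + harmonic b + harmonic e"
proof -
  obtain c where "p ^ a = p * (p * p ^ c)" using assms(2)
    by (metis add_2_eq_Suc le_Suc_ex power_Suc)
  then have eq: "p ^ a + p * b + e = e + p * (b + p * p ^ c)" by (simp add: algebra_simps)
  have "digit_harmonic p (p ^ c) = 1"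
    using digit_harmonic_mult_power[OF assms(1), of c 1] digit_harmonic_eq[OF assms(1), of 1] assms(1)
    by (simp add: harmonic_Suc[of 0] digit_harmonic.simps[of p 0])
  then have "digit_harmonic p (b + p * p ^ c) = harmonic b + 1"
    using assms digit_harmonic_eq[OF assms(1), of "b + p * p ^ c"] by simp
  then show ?thesis
    using assms digit_harmonic_eq[OF assms(1), of "e + p * (b + p * p ^ c)"] unfolding eq by simp
qed

section \<open>Congruences between power series\<close>

lemma one_minus_X_power_power_nth:
  assumes "a > 0"
  shows "((1 - fps_X ^ a :: int fps) ^ r) $ k =
    (if a dvd k \<and> k div a \<le> r then (-1) ^ (k div a) * int (r choose (k div a)) else 0)"
proof -
  have "(1 - fps_X ^ a :: int fps) ^ r = (fps_const (-1) * fps_X ^ a + 1) ^ r"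
    by simp
  also have "\<dots> = (\<Sum>d\<le>r. of_nat (r choose d) * (fps_const (-1) * fps_X ^ a) ^ d * 1 ^ (r - d))"
    by (rule binomial_ring)
  also have "\<dots> = (\<Sum>d\<le>r. fps_const (int (r choose d) * (-1) ^ d) * fps_X ^ (a * d))"
    by (simp add: power_mult_distrib power_mult mult.assoc[symmetric] flip: fps_of_nat)
  finally have "((1 - fps_X ^ a :: int fps) ^ r) $ k =
      (\<Sum>d\<le>r. (fps_const (int (r choose d) * (-1) ^ d) * fps_X ^ (a * d)) $ k)"
    by (simp only: fps_sum_nth)
  also have "\<dots> = (\<Sum>d\<le>r. if k = a * d then (-1) ^ d * int (r choose d) else 0)"
    by (intro sum.cong) auto
  also have "\<dots> = (if a dvd k \<and> k div a \<le> r then (-1) ^ (k div a) * int (r choose (k div a)) else 0)"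
  proof (cases "a dvd k")
    case True
    then have "k = a * d \<longleftrightarrow> d = k div a" for d using assms by auto
    then show ?thesis using True by simp
  qed (auto intro!: sum.neutral)
  finally show ?thesis .
qed

lemma power_prime_add:
  fixes x y :: "'a :: comm_ring_1"
  assumes "prime p"
  obtains z where "(x + y) ^ p = x ^ p + y ^ p + of_nat p * z"
proof -
  have "p > 0" using assms prime_gt_0_nat by blast
  have "{..p} = {0, p} \<union> {1..<p}" "{0, p} \<inter> {1..<p} = {}" using \<open>p > 0\<close> by auto
  then have expand: "(x + y) ^ p = x ^ p + y ^ p + (\<Sum>k=1..<p. of_nat (p choose k) * x ^ k * y ^ (p - k))"
    unfolding binomial_ring using \<open>p > 0\<close> by (simp add: sum.union_disjoint)
  have "of_nat (p choose k) * x ^ k * y ^ (p - k) = of_nat p * (of_nat ((p choose k) div p) * x ^ k * y ^ (p - k))"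
    if "k \<in> {1..<p}" for k
  proof -
    have "p dvd p choose k"
      using assms that by (intro dvd_choose_prime) auto
    then obtain c where c: "p choose k = p * c" ..
    then have "(p choose k) div p = c" using \<open>p > 0\<close> by simp
    then show ?thesis using c by (simp add: mult.assoc)
  qed
  then have "(\<Sum>k=1..<p. of_nat (p choose k) * x ^ k * y ^ (p - k)) =
      of_nat p * (\<Sum>k=1..<p. of_nat ((p choose k) div p) * x ^ k * y ^ (p - k))"
    unfolding sum_distrib_left by (rule sum.cong[OF refl])
  then show ?thesis using expand that by simp
qed

lemma fps_const_dvd_frobenius:
  assumes "prime p" "odd p"
  shows "fps_const (int p) dvd (1 - fps_X ^ a :: int fps) ^ p - (1 - fps_X ^ (a * p))"
proof -
  obtain z where "(1 + - (fps_X ^ a) :: int fps) ^ p = 1 ^ p + (- (fps_X ^ a)) ^ p + of_nat p * z"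
    using power_prime_add[OF assms(1)] .
  then have "(1 - fps_X ^ a :: int fps) ^ p - (1 - fps_X ^ (a * p)) = fps_const (int p) * z"
    using assms(2) by (simp add: power_mult algebra_simps flip: fps_of_nat)
  then show ?thesis by simp
qed

lemma fps_const_dvd_one_minus_X_prime_power:
  assumes "prime p" "odd p"
  shows "fps_const (int p) dvd (1 - fps_X :: int fps) ^ (p ^ s) - (1 - fps_X ^ (p ^ s))"
proof (induction s)
  case (Suc s)
  have "(1 - fps_X :: int fps) ^ (p ^ s) - (1 - fps_X ^ (p ^ s)) dvd
      ((1 - fps_X) ^ (p ^ s)) ^ p - (1 - fps_X ^ (p ^ s)) ^ p"
    by (simp add: power_diff_sumr2)
  then have "fps_const (int p) dvd ((1 - fps_X :: int fps) ^ (p ^ s)) ^ p - (1 - fps_X ^ (p ^ s)) ^ p"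
    using Suc.IH dvd_trans by blast
  moreover have "fps_const (int p) dvd (1 - fps_X ^ (p ^ s) :: int fps) ^ p - (1 - fps_X ^ (p ^ s * p))"
    using fps_const_dvd_frobenius[OF assms] .
  moreover have "(1 - fps_X :: int fps) ^ (p ^ Suc s) - (1 - fps_X ^ (p ^ Suc s)) =
      (((1 - fps_X) ^ (p ^ s)) ^ p - (1 - fps_X ^ (p ^ s)) ^ p) +
      ((1 - fps_X ^ (p ^ s)) ^ p - (1 - fps_X ^ (p ^ s * p)))"
    by (simp add: power_mult[symmetric] mult.commute)
  ultimately show ?case by (simp only: dvd_add)
qed simp

lemma fps_const_dvd_one_minus_X_power_mult_diff:
  assumes "prime p" "odd p"
  shows "fps_const (int p) dvd (1 - fps_X :: int fps) ^ (u * p ^ s) - (1 - fps_X ^ (p ^ s)) ^ u"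
proof -
  have "(1 - fps_X :: int fps) ^ (p ^ s) - (1 - fps_X ^ (p ^ s)) dvd
      ((1 - fps_X) ^ (p ^ s)) ^ u - (1 - fps_X ^ (p ^ s)) ^ u"
    by (simp add: power_diff_sumr2)
  then show ?thesis
    using fps_const_dvd_one_minus_X_prime_power[OF assms] dvd_trans
    unfolding mult.commute[of u] power_mult by blast
qed

lemma dvd_prod_diff:
  fixes f g :: "'b \<Rightarrow> 'a :: comm_ring_1"
  assumes "\<And>i. i \<in> S \<Longrightarrow> m dvd f i - g i"
  shows "m dvd prod f S - prod g S"
  using assms
proof (induction S rule: infinite_finite_induct)
  case (insert i S)
  have "prod f (insert i S) - prod g (insert i S) = (f i - g i) * prod f S + g i * (prod f S - prod g S)"
    using insert.hyps by (simp add: algebra_simps)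
  then show ?case using insert by simp
qed simp_all

definition coeffs_dvd_below :: "int \<Rightarrow> nat \<Rightarrow> int fps \<Rightarrow> bool" where
  "coeffs_dvd_below m N f \<longleftrightarrow> (\<forall>i<N. m dvd f $ i)"

lemma coeffs_dvd_below_diff:
  "coeffs_dvd_below m N f \<Longrightarrow> coeffs_dvd_below m N g \<Longrightarrow> coeffs_dvd_below m N (f - g)"
  unfolding coeffs_dvd_below_def by auto

lemma coeffs_dvd_below_sum:
  "(\<And>i. i \<in> S \<Longrightarrow> coeffs_dvd_below m N (f i)) \<Longrightarrow> coeffs_dvd_below m N (\<Sum>i\<in>S. f i)"
  unfolding coeffs_dvd_below_def by (induction S rule: infinite_finite_induct) (auto simp: fps_sum_nth)

lemma coeffs_dvd_below_mult_left: "coeffs_dvd_below m N f \<Longrightarrow> coeffs_dvd_below m N (g * f)"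
  unfolding coeffs_dvd_below_def fps_mult_nth by (auto intro!: dvd_sum)

lemma coeffs_dvd_below_mult_right: "coeffs_dvd_below m N f \<Longrightarrow> coeffs_dvd_below m N (f * g)"
  using coeffs_dvd_below_mult_left[of m N f g] by (simp add: mult.commute)

lemma coeffs_dvd_below_mult:
  "coeffs_dvd_below a N f \<Longrightarrow> coeffs_dvd_below b N g \<Longrightarrow> coeffs_dvd_below (a * b) N (f * g)"
  unfolding coeffs_dvd_below_def fps_mult_nth by (auto intro!: dvd_sum mult_dvd_mono)

lemma coeffs_dvd_below_X_power_mult: "coeffs_dvd_below m N (fps_X ^ N * g)"
  unfolding coeffs_dvd_below_def by (auto simp: fps_X_power_mult_nth)

lemma fps_const_dvd_nth: "fps_const c dvd f \<Longrightarrow> c dvd f $ n"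
  by auto

lemma coeffs_dvd_below_fps_const_dvd: "fps_const m dvd f \<Longrightarrow> coeffs_dvd_below m N f"
  unfolding coeffs_dvd_below_def by (simp add: fps_const_dvd_nth)

text \<open>In the binomial expansion the linear term in \<open>z\<close> carries the factor \<open>w\<close>, all other terms
  carry \<open>z^2\<close>.\<close>

lemma coeffs_dvd_below_power_add:
  assumes "coeffs_dvd_below m N z" "m dvd int w"
  shows "coeffs_dvd_below (m ^ 2) N ((y + z) ^ w - y ^ w)"
proof -
  have "(z + y) ^ w = y ^ w + (\<Sum>j\<in>{..w} - {0}. of_nat (w choose j) * z ^ j * y ^ (w - j))"
    unfolding binomial_ring by (subst sum.remove[of _ 0]) auto
  then have expand: "(y + z) ^ w - y ^ w = (\<Sum>j\<in>{..w} - {0}. of_nat (w choose j) * z ^ j * y ^ (w - j))"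
    by (simp add: add.commute)
  have "coeffs_dvd_below (m ^ 2) N (of_nat (w choose j) * z ^ j * y ^ (w - j))"
    if "j \<in> {..w} - {0}" for j
  proof (cases "j = 1")
    case True
    have "coeffs_dvd_below m N (fps_const (int w))"
      using assms(2) unfolding coeffs_dvd_below_def by auto
    then have "coeffs_dvd_below (m ^ 2) N (fps_const (int w) * z)"
      using coeffs_dvd_below_mult[OF _ assms(1)] by (simp add: power2_eq_square)
    then show ?thesis
      using True by (simp add: coeffs_dvd_below_mult_right flip: fps_of_nat)
  next
    case False
    then have "j = 2 + (j - 2)" using that by auto
    then have "z ^ j = z ^ 2 * z ^ (j - 2)" by (metis power_add)
    then have zj: "z ^ j = z * z * z ^ (j - 2)" by (simp add: power2_eq_square)
    have "coeffs_dvd_below (m ^ 2) N (z * z)"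
      using coeffs_dvd_below_mult[OF assms(1) assms(1)] by (simp add: power2_eq_square)
    then show ?thesis unfolding zj
      by (intro coeffs_dvd_below_mult_right[of _ _ "_ * _"] coeffs_dvd_below_mult_left[of _ _ "_ * _ * _"])
  qed
  then show ?thesis unfolding expand by (rule coeffs_dvd_below_sum)
qed

lemma fps_mult_nth_sparse:
  fixes f g :: "'a :: comm_semiring_1 fps"
  assumes "b > 0" and f: "\<And>j. j \<ge> b \<Longrightarrow> f $ j = 0" and g: "\<And>t. \<not> b dvd t \<Longrightarrow> g $ t = 0"
  shows "(f * g) $ m = f $ (m mod b) * g $ (b * (m div b))"
proof -
  have "(f * g) $ m = (\<Sum>j\<in>{m mod b}. f $ j * g $ (m - j))"
    unfolding fps_mult_nth
  proof (rule sum.mono_neutral_right)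
    show "\<forall>j\<in>{0..m} - {m mod b}. f $ j * g $ (m - j) = 0"
    proof
      fix j assume j: "j \<in> {0..m} - {m mod b}"
      show "f $ j * g $ (m - j) = 0"
      proof (cases "j < b \<and> b dvd m - j")
        case True
        then obtain t where "m - j = b * t" by blast
        then have "m = j + b * t" using j by auto
        then show ?thesis using True j by simp
      next
        case False
        then show ?thesis using f g by (cases "j < b") auto
      qed
    qed
  qed auto
  moreover have "m - m mod b = b * (m div b)"
    by (simp add: minus_mod_eq_mult_div)
  ultimately show ?thesis by simp
qed

lemma prod_one_minus_X_power_nth:
  assumes "p \<ge> 2"
  shows "(\<Prod>i<L. (1 - fps_X ^ (p ^ i) :: int fps) ^ (p - 1)) $ m =
    (if m < p ^ L then digit_signed_binom p m else 0)"
proof (induction L arbitrary: m)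
  case 0
  then show ?case by (simp add: digit_signed_binom.simps)
next
  case (Suc L)
  define b where "b = p ^ L"
  have "b > 0" using assms unfolding b_def by simp
  have top: "(1 - fps_X ^ b :: int fps) ^ (p - 1) $ t =
      (if b dvd t \<and> t div b < p then signed_binom p (t div b) else 0)" for t
    using one_minus_X_power_power_nth[OF \<open>b > 0\<close>] assms by (auto simp: signed_binom_def)
  define F where "F = (\<Prod>i<L. (1 - fps_X ^ (p ^ i) :: int fps) ^ (p - 1))"
  have "F $ j = 0" if "j \<ge> b" for j
    using Suc.IH that unfolding F_def b_def by simp
  moreover have "(1 - fps_X ^ b :: int fps) ^ (p - 1) $ t = 0" if "\<not> b dvd t" for t
    using top that by simp
  ultimately have "(F * (1 - fps_X ^ b) ^ (p - 1)) $ m =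
      F $ (m mod b) * (1 - fps_X ^ b) ^ (p - 1) $ (b * (m div b))"
    by (rule fps_mult_nth_sparse[OF \<open>b > 0\<close>])
  also have "\<dots> = digit_signed_binom p (m mod b) * (if m div b < p then signed_binom p (m div b) else 0)"
    using Suc.IH top \<open>b > 0\<close> unfolding F_def b_def by simp
  finally have "(\<Prod>i<Suc L. (1 - fps_X ^ (p ^ i) :: int fps) ^ (p - 1)) $ m =
      digit_signed_binom p (m mod b) * (if m div b < p then signed_binom p (m div b) else 0)"
    unfolding F_def b_def by simp
  moreover have "m < p ^ Suc L \<longleftrightarrow> m div b < p"
    using \<open>b > 0\<close> unfolding b_def by (simp add: div_less_iff_less_mult mult.commute)
  moreover have "digit_signed_binom p m = digit_signed_binom p (m mod b) * signed_binom p (m div b)"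
    if "m div b < p"
    using digit_signed_binom_mod_div[OF assms, of m L] digit_signed_binom_eq[OF assms, of "m div b"] that
    unfolding b_def by (simp add: digit_signed_binom.simps[of p 0])
  ultimately show ?case by auto
qed

lemma less_power_Suc:
  assumes "p \<ge> 2" shows "n < p ^ Suc n"
proof -
  have "n < 2 ^ n" by (rule less_exp)
  also have "(2::nat) ^ n \<le> p ^ n" using assms by (rule power_mono) simp
  also have "p ^ n \<le> p ^ Suc n" using assms by simp
  finally show ?thesis .
qed

lemma prod_atMost_one_minus_X_power_nth:
  assumes "p \<ge> 2" "m \<le> n"
  shows "((\<Prod>i\<le>n. 1 - fps_X ^ (p ^ i) :: int fps) ^ (p - 1)) $ m = digit_signed_binom p m"
  using prod_one_minus_X_power_nth[OF assms(1), of "Suc n" m] less_power_Suc[OF assms(1), of n] assms(2)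
  by (simp add: prod_power_distrib lessThan_Suc_atMost)

section \<open>Reduction of \<open>A\<close> modulo \<open>p^2\<close>\<close>

lemma A_eq_geom_prod_power_nth: "A m k n = ((\<Prod>i\<le>n. geom (m ^ i)) ^ k) $ n"
  unfolding A_def prod_power_distrib ..

lemma geom_prod_mult_inverse:
  assumes "m > 0"
  shows "(\<Prod>i\<le>n. geom (m ^ i)) * (\<Prod>i\<le>n. 1 - fps_X ^ (m ^ i)) = 1"
  using assms by (simp add: geom_inverse Suc_leI flip: prod.distrib)

text \<open>Modulo \<open>p\<close>, \<open>P^p\<close> equals \<open>\<Prod>i\<le>n. 1 - X^(p^(i+1))\<close>, which telescopes to
  \<open>P (1 - X^(p^(n+1))) / (1 - X)\<close>; multiplying by \<open>G^p = P^-p\<close> gives \<open>G^(p-1) \<equiv> 1 - X\<close>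
  below degree \<open>p^(n+1)\<close>.\<close>

lemma coeffs_dvd_below_geom_prod_power:
  assumes "prime p" "odd p"
  shows "coeffs_dvd_below (int p) (p ^ Suc n) ((\<Prod>i\<le>n. geom (p ^ i)) ^ (p - 1) - (1 - fps_X))"
proof -
  define G P Q N where "G = (\<Prod>i\<le>n. geom (p ^ i))" and "P = (\<Prod>i\<le>n. 1 - fps_X ^ (p ^ i) :: int fps)"
    and "Q = (\<Prod>i\<le>n. 1 - fps_X ^ (p ^ Suc i) :: int fps)" and "N = p ^ Suc n"
  have "p > 0" using assms(1) prime_gt_0_nat by blast
  have GP: "G * P = 1" unfolding G_def P_def using geom_prod_mult_inverse[OF \<open>p > 0\<close>] .
  have "fps_const (int p) dvd P ^ p - Q"
    unfolding P_def Q_def prod_power_distrib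
    by (rule dvd_prod_diff) (simp only: power_Suc2 fps_const_dvd_frobenius[OF assms])
  then have frob: "fps_const (int p) dvd G ^ p * ((P ^ p - Q) * (1 - fps_X))"
    by simp
  have "(\<Prod>i\<le>Suc n. 1 - fps_X ^ (p ^ i) :: int fps) = (1 - fps_X ^ (p ^ 0)) * Q"
    unfolding Q_def by (rule prod.atMost_Suc_shift)
  moreover have "(\<Prod>i\<le>Suc n. 1 - fps_X ^ (p ^ i) :: int fps) = P * (1 - fps_X ^ N)"
    unfolding P_def N_def by (rule prod.atMost_Suc)
  ultimately have "Q * (1 - fps_X) = P * (1 - fps_X ^ N)"
    by (simp add: mult.commute)
  moreover have "G ^ p = G ^ (p - 1) * G"
    using \<open>p > 0\<close> by (simp add: power_eq_if)
  ultimately have "G ^ p * (Q * (1 - fps_X)) = G ^ (p - 1) * (G * P) * (1 - fps_X ^ N)"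
    by (simp only: mult_ac)
  moreover have "G ^ p * ((P ^ p - Q) * (1 - fps_X)) =
      (G * P) ^ p * (1 - fps_X) - G ^ p * (Q * (1 - fps_X))"
    by (simp add: algebra_simps)
  ultimately have "G ^ p * ((P ^ p - Q) * (1 - fps_X)) =
      (G * P) ^ p * (1 - fps_X) - G ^ (p - 1) * (G * P) * (1 - fps_X ^ N)"
    by simp
  then have eq: "G ^ (p - 1) - (1 - fps_X) =
      fps_X ^ N * G ^ (p - 1) - G ^ p * ((P ^ p - Q) * (1 - fps_X))"
    unfolding GP by (simp add: algebra_simps)
  show ?thesis
    unfolding G_def[symmetric] N_def[symmetric] eq
    by (intro coeffs_dvd_below_diff coeffs_dvd_below_X_power_mult coeffs_dvd_below_fps_const_dvd[OF frob])
qed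

lemma A_cong_coeff_mod_p_squared:
  assumes "prime p" "odd p" "w \<ge> 1" "p dvd w"
  shows "int p ^ 2 dvd A p ((p - 1) * (w - 1)) n -
    ((1 - fps_X) ^ w * (\<Prod>i\<le>n. 1 - fps_X ^ (p ^ i) :: int fps) ^ (p - 1)) $ n"
proof -
  define G P where "G = (\<Prod>i\<le>n. geom (p ^ i))" and "P = (\<Prod>i\<le>n. 1 - fps_X ^ (p ^ i) :: int fps)"
  have "p > 0" using assms(1) prime_gt_0_nat by blast
  have GP: "G * P = 1" unfolding G_def P_def using geom_prod_mult_inverse[OF \<open>p > 0\<close>] .
  have "(p - 1) * w = (p - 1) * (w - 1) + (p - 1)"
    using assms(3) by (cases w) simp_all
  then have "(G ^ (p - 1)) ^ w = G ^ ((p - 1) * (w - 1)) * G ^ (p - 1)"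
    by (simp only: power_mult[symmetric] power_add)
  then have "(G ^ (p - 1)) ^ w * P ^ (p - 1) = G ^ ((p - 1) * (w - 1)) * (G * P) ^ (p - 1)"
    by (simp only: power_mult_distrib mult.assoc)
  then have split: "G ^ ((p - 1) * (w - 1)) - (1 - fps_X) ^ w * P ^ (p - 1) =
      ((1 - fps_X + (G ^ (p - 1) - (1 - fps_X))) ^ w - (1 - fps_X) ^ w) * P ^ (p - 1)"
    unfolding GP by (simp add: algebra_simps)
  have "coeffs_dvd_below (int p) (p ^ Suc n) (G ^ (p - 1) - (1 - fps_X))"
    unfolding G_def by (rule coeffs_dvd_below_geom_prod_power[OF assms(1,2)])
  moreover have "int p dvd int w" using assms(4) by simp
  ultimately have "coeffs_dvd_below (int p ^ 2) (p ^ Suc n)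
      ((1 - fps_X + (G ^ (p - 1) - (1 - fps_X))) ^ w - (1 - fps_X) ^ w)"
    by (rule coeffs_dvd_below_power_add)
  then have "coeffs_dvd_below (int p ^ 2) (p ^ Suc n) (G ^ ((p - 1) * (w - 1)) - (1 - fps_X) ^ w * P ^ (p - 1))"
    unfolding split by (rule coeffs_dvd_below_mult_right)
  moreover have "n < p ^ Suc n"
    using assms(1) prime_ge_2_nat less_power_Suc by blast
  ultimately have "int p ^ 2 dvd (G ^ ((p - 1) * (w - 1)) - (1 - fps_X) ^ w * P ^ (p - 1)) $ n"
    unfolding coeffs_dvd_below_def by blast
  then show ?thesis
    unfolding A_eq_geom_prod_power_nth G_def[symmetric] P_def[symmetric] by (simp only: fps_sub_nth)
qed

lemma sum_one_minus_X_power_nth: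
  assumes "1 \<le> w" "w \<le> n"
  shows "(\<Sum>i=0..n. ((1 - fps_X) ^ w :: int fps) $ i) = 0"
proof -
  have coeff: "((1 - fps_X) ^ w :: int fps) $ i = (if i \<le> w then (-1) ^ i * int (w choose i) else 0)" for i
    using one_minus_X_power_power_nth[of 1 w i] by simp
  have "(\<Sum>i=0..n. ((1 - fps_X) ^ w :: int fps) $ i) = (\<Sum>i\<le>w. ((1 - fps_X) ^ w :: int fps) $ i)"
    using assms(2) by (intro sum.mono_neutral_right) (auto simp: coeff)
  also have "\<dots> = (\<Sum>i\<le>w. (-1) ^ i * of_nat (w choose i))"
    by (simp add: coeff)
  also have "\<dots> = 0"
    using assms(1) by (intro choose_alternating_sum) auto
  finally show ?thesis .
qed

lemma sum_one_minus_X_power_power_nth_mult: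
  fixes h :: "nat \<Rightarrow> rat"
  assumes "a > 0" "a * u \<le> n"
  shows "(\<Sum>i=0..n. of_int (((1 - fps_X ^ a) ^ u :: int fps) $ i) * h i) =
    (\<Sum>j\<le>u. (-1) ^ j * of_nat (u choose j) * h (a * j))"
proof -
  have coeff: "((1 - fps_X ^ a) ^ u :: int fps) $ i =
      (if a dvd i \<and> i div a \<le> u then (-1) ^ (i div a) * int (u choose (i div a)) else 0)" for i
    using one_minus_X_power_power_nth[OF assms(1)] .
  have "(\<Sum>i=0..n. of_int (((1 - fps_X ^ a) ^ u :: int fps) $ i) * h i) =
      (\<Sum>i\<in>(\<lambda>j. a * j) ` {..u}. of_int (((1 - fps_X ^ a) ^ u :: int fps) $ i) * h i)"
  proof (rule sum.mono_neutral_right)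
    show "(\<lambda>j. a * j) ` {..u} \<subseteq> {0..n}"
      using assms(2) by (auto intro: order_trans[OF mult_le_mono2])
    show "\<forall>i\<in>{0..n} - (\<lambda>j. a * j) ` {..u}. of_int (((1 - fps_X ^ a) ^ u :: int fps) $ i) * h i = 0"
    proof
      fix i assume i: "i \<in> {0..n} - (\<lambda>j. a * j) ` {..u}"
      have "\<not> (a dvd i \<and> i div a \<le> u)"
      proof
        assume "a dvd i \<and> i div a \<le> u"
        then have "i = a * (i div a)" "i div a \<in> {..u}" by auto
        then show False using i by blast
      qed
      then show "of_int (((1 - fps_X ^ a) ^ u :: int fps) $ i) * h i = 0" by (auto simp: coeff)
    qed
  qed simp
  also have "\<dots> = (\<Sum>j\<le>u. of_int (((1 - fps_X ^ a) ^ u :: int fps) $ (a * j)) * h (a * j))"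
    using assms(1) by (subst sum.reindex) (auto simp: inj_on_def)
  also have "\<dots> = (\<Sum>j\<le>u. (-1) ^ j * of_nat (u choose j) * h (a * j))"
    using assms(1) by (intro sum.cong) (auto simp: coeff)
  finally show ?thesis .
qed

definition digit_harmonic_diff :: "nat \<Rightarrow> nat \<Rightarrow> nat \<Rightarrow> rat" where
  "digit_harmonic_diff p u q = (\<Sum>j\<le>u. (-1) ^ j * of_nat (u choose j) * digit_harmonic p (q - j))"

lemma p_multiple_coeff_add_digit_harmonic_diff:
  assumes "prime p" "odd p" "1 \<le> u" "u \<le> q"
  shows "p_multiple p 2 (of_int (((1 - fps_X) ^ (u * p ^ s) *
      (\<Prod>i\<le>p ^ s * q. 1 - fps_X ^ (p ^ i) :: int fps) ^ (p - 1)) $ (p ^ s * q))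
    + of_nat p * digit_harmonic_diff p u q)"
proof -
  have p2: "p \<ge> 2" using assms(1) prime_ge_2_nat by blast
  define n w where "n = p ^ s * q" and "w = u * p ^ s"
  define b b' c h where "b i = ((1 - fps_X :: int fps) ^ w) $ i"
    and "b' i = ((1 - fps_X ^ (p ^ s) :: int fps) ^ u) $ i"
    and "c i = digit_signed_binom p (n - i)" and "h i = digit_harmonic p (n - i)" for i
  have "w \<le> n" "1 \<le> w" using assms(3,4) p2 unfolding n_def w_def by (simp_all add: mult.commute)
  have Y: "((1 - fps_X) ^ w * (\<Prod>i\<le>n. 1 - fps_X ^ (p ^ i) :: int fps) ^ (p - 1)) $ n =
      (\<Sum>i=0..n. b i * c i)"
    unfolding fps_mult_nth b_def c_def using prod_atMost_one_minus_X_power_nth[OF p2]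
    by (intro sum.cong) auto
  have "p_multiple p 1 (of_int (b i - b' i))" for i
    using fps_const_dvd_one_minus_X_power_mult_diff[OF assms(1,2)]
    unfolding b_def b'_def w_def p_multiple_of_int_iff[OF assms(1)] by (simp flip: fps_sub_nth add: fps_const_dvd_nth)
  then have "p_multiple p 1 (\<Sum>i=0..n. of_int (b i - b' i) * h i)"
    unfolding h_def using p_integral_digit_harmonic[OF assms(1)]
    by (intro p_multiple_sum p_multiple_mult_right) auto
  then have low: "p_multiple p 2 (of_nat p * (\<Sum>i=0..n. of_int (b i - b' i) * h i))"
    by (rule p_multiple_Suc[of p 1, unfolded Suc_1])
  have high: "p_multiple p 2 (\<Sum>i=0..n. of_int (b i) * (of_int (c i) - (1 - of_nat p * h i)))"
    unfolding c_def h_def using p_multiple_digit_signed_binom[OF assms(1)]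
    by (intro p_multiple_sum p_multiple_mult_left) auto
  have "(\<Sum>i=0..n. of_int (b' i) * h i) = (\<Sum>j\<le>u. (-1) ^ j * of_nat (u choose j) * h (p ^ s * j))"
    unfolding b'_def using p2 assms(4)
    by (intro sum_one_minus_X_power_power_nth_mult) (simp_all add: n_def)
  also have "\<dots> = digit_harmonic_diff p u q"
    unfolding digit_harmonic_diff_def h_def n_def
    by (intro sum.cong refl) (simp add: digit_harmonic_mult_power[OF p2] flip: diff_mult_distrib2)
  finally have b'_sum: "(\<Sum>i=0..n. of_int (b' i) * h i) = digit_harmonic_diff p u q" .
  have b_sum: "(\<Sum>i=0..n. (of_int (b i) :: rat)) = 0"
    using sum_one_minus_X_power_nth[OF \<open>1 \<le> w\<close> \<open>w \<le> n\<close>] unfolding b_def by (simp flip: of_int_sum)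
  have "(\<Sum>i=0..n. of_int (b i) * of_int (c i) :: rat) =
      (\<Sum>i=0..n. of_int (b i) * (of_int (c i) - (1 - of_nat p * h i))) + (\<Sum>i=0..n. of_int (b i))
      - of_nat p * (\<Sum>i=0..n. of_int (b i - b' i) * h i) - of_nat p * (\<Sum>i=0..n. of_int (b' i) * h i)"
    by (simp add: sum_distrib_left sum.distrib[symmetric] sum_subtractf[symmetric] algebra_simps)
  then have "of_int (\<Sum>i=0..n. b i * c i) + of_nat p * digit_harmonic_diff p u q =
      (\<Sum>i=0..n. of_int (b i) * (of_int (c i) - (1 - of_nat p * h i))) -
      of_nat p * (\<Sum>i=0..n. of_int (b i - b' i) * h i)"
    unfolding b'_sum b_sum by simp
  then have "p_multiple p 2 (of_int (\<Sum>i=0..n. b i * c i) + of_nat p * digit_harmonic_diff p u q)"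
    using p_multiple_diff[OF high low] by simp
  then show ?thesis
    unfolding n_def[symmetric] w_def[symmetric] Y .
qed

lemma p_squared_dvd_A:
  assumes "prime p" "odd p" "1 \<le> u" "u \<le> q" "s \<ge> 1"
    and "p_multiple p 1 (digit_harmonic_diff p u q)"
  shows "int p ^ 2 dvd A p ((p - 1) * (u * p ^ s - 1)) (p ^ s * q)"
proof -
  define Y where "Y = ((1 - fps_X) ^ (u * p ^ s) *
      (\<Prod>i\<le>p ^ s * q. 1 - fps_X ^ (p ^ i) :: int fps) ^ (p - 1)) $ (p ^ s * q)"
  have "p > 0" using assms(1) prime_gt_0_nat by blast
  then have "u * p ^ s \<ge> 1" "p dvd u * p ^ s" using assms(3,5) by simp_all
  then have "int p ^ 2 dvd A p ((p - 1) * (u * p ^ s - 1)) (p ^ s * q) - Y"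
    unfolding Y_def by (rule A_cong_coeff_mod_p_squared[OF assms(1,2)])
  moreover have "p_multiple p 2 (of_int Y)"
  proof -
    have "p_multiple p 2 (of_nat p * digit_harmonic_diff p u q)"
      using assms(6) by (rule p_multiple_Suc[of p 1, unfolded Suc_1])
    then have "p_multiple p 2 ((of_int Y + of_nat p * digit_harmonic_diff p u q) - of_nat p * digit_harmonic_diff p u q)"
      using p_multiple_coeff_add_digit_harmonic_diff[OF assms(1-4), of s] unfolding Y_def by (rule p_multiple_diff[rotated])
    then show ?thesis by simp
  qed
  then have "int p ^ 2 dvd Y" by (simp add: p_multiple_of_int_iff[OF assms(1)])
  ultimately show ?thesis by (metis dvd_add diff_add_cancel)
qed

section \<open>Alternating binomial sums of harmonic numbers\<close>

lemma alternating_binomial_sum_Suc: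
  fixes g :: "nat \<Rightarrow> 'a :: comm_ring_1"
  shows "(\<Sum>i\<le>Suc u. (-1) ^ i * of_nat (Suc u choose i) * g i) =
    (\<Sum>i\<le>u. (-1) ^ i * of_nat (u choose i) * g i) - (\<Sum>i\<le>u. (-1) ^ i * of_nat (u choose i) * g (Suc i))"
proof -
  have shift_Suc: "(\<Sum>i\<le>Suc u. (-1) ^ i * of_nat (Suc u choose i) * g i) =
      g 0 + (\<Sum>i\<le>u. (-1) ^ Suc i * of_nat (Suc u choose Suc i) * g (Suc i))"
    by (subst sum.atMost_Suc_shift) simp
  have "(\<Sum>i\<le>u. (-1) ^ i * of_nat (u choose i) * g i) = (\<Sum>i\<le>Suc u. (-1) ^ i * of_nat (u choose i) * g i)"
    by (simp add: binomial_eq_0)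
  also have "\<dots> = g 0 + (\<Sum>i\<le>u. (-1) ^ Suc i * of_nat (u choose Suc i) * g (Suc i))"
    by (subst sum.atMost_Suc_shift) simp
  finally have shift: "(\<Sum>i\<le>u. (-1) ^ i * of_nat (u choose i) * g i) =
      g 0 + (\<Sum>i\<le>u. (-1) ^ Suc i * of_nat (u choose Suc i) * g (Suc i))" .
  have "(\<Sum>i\<le>u. (-1) ^ Suc i * of_nat (Suc u choose Suc i) * g (Suc i)) =
      (\<Sum>i\<le>u. (-1) ^ Suc i * of_nat (u choose Suc i) * g (Suc i)) -
      (\<Sum>i\<le>u. (-1) ^ i * of_nat (u choose i) * g (Suc i))"
    unfolding sum_subtractf[symmetric] by (rule sum.cong) (simp_all add: algebra_simps)
  then show ?thesis using shift_Suc shift by simp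
qed

lemma alternating_binomial_sum_const:
  "u \<ge> 1 \<Longrightarrow> (\<Sum>j\<le>u. (-1) ^ j * of_nat (u choose j) * (c :: 'a :: comm_ring_1)) = 0"
  by (simp add: choose_alternating_sum flip: sum_distrib_right)

lemma alternating_binomial_sum_first_two:
  assumes "u \<ge> 1"
  shows "(\<Sum>j\<le>u. (-1) ^ j * of_nat (u choose j) * (if j = 0 then x else if j = 1 then y else 0)) =
    x - of_nat u * (y :: 'a :: comm_ring_1)"
proof -
  have "(\<Sum>j\<le>u. (-1) ^ j * of_nat (u choose j) * (if j = 0 then x else if j = 1 then y else 0)) =
      (\<Sum>j\<in>{0, 1}. (-1) ^ j * of_nat (u choose j) * (if j = 0 then x else if j = 1 then y else 0))"
    using assms by (intro sum.mono_neutral_right) auto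
  then show ?thesis by simp
qed

lemma alternating_binomial_sum_first:
  "(\<Sum>j\<le>u. (-1) ^ j * of_nat (u choose j) * (if j = 0 then x else 0)) = (x :: 'a :: comm_ring_1)"
proof -
  have "(\<Sum>j\<le>u. (-1) ^ j * of_nat (u choose j) * (if j = 0 then x else 0)) =
      (\<Sum>j\<in>{0}. (-1) ^ j * of_nat (u choose j) * (if j = 0 then x else 0))"
    by (intro sum.mono_neutral_right) auto
  then show ?thesis by simp
qed

lemma alternating_binomial_sum_inverse_Suc:
  "(\<Sum>i\<le>u. (-1) ^ i * of_nat (u choose i) * (1 / of_nat (Suc i))) = (1 / of_nat (Suc u) :: rat)"
proof -
  have "(-1) ^ i * of_nat (u choose i) * (1 / of_nat (Suc i)) =
      ((-1) ^ i * of_nat (Suc u choose Suc i) / of_nat (Suc u) :: rat)" for i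
  proof -
    have "of_nat (Suc u * (u choose i)) = (of_nat ((Suc u choose Suc i) * Suc i) :: rat)"
      by (simp only: Suc_times_binomial_eq)
    then show ?thesis by (simp add: field_simps del: of_nat_Suc binomial_Suc_Suc) (simp add: algebra_simps)
  qed
  then have "(\<Sum>i\<le>u. (-1) ^ i * of_nat (u choose i) * (1 / of_nat (Suc i))) =
      (\<Sum>i\<le>u. (-1) ^ i * of_nat (Suc u choose Suc i)) / (of_nat (Suc u) :: rat)"
    unfolding sum_divide_distrib by simp
  moreover have "(\<Sum>i\<le>Suc u. (-1) ^ i * of_nat (Suc u choose i)) = (0::rat)"
    by (rule choose_alternating_sum) simp
  then have "1 + (\<Sum>i\<le>u. (-1) ^ Suc i * of_nat (Suc u choose Suc i)) = (0::rat)"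
    by (subst (asm) sum.atMost_Suc_shift) simp
  then have "(\<Sum>i\<le>u. (-1) ^ i * of_nat (Suc u choose Suc i)) = (1::rat)"
    by (simp add: sum_negf)
  ultimately show ?thesis by simp
qed

lemma alternating_binomial_sum_harmonic:
  "(\<Sum>i\<le>Suc u. (-1) ^ i * of_nat (Suc u choose i) * harmonic i) = - 1 / of_nat (Suc u)"
proof -
  have "(\<Sum>i\<le>u. (-1) ^ i * of_nat (u choose i) * harmonic (Suc i)) =
      (\<Sum>i\<le>u. (-1) ^ i * of_nat (u choose i) * harmonic i) +
      (\<Sum>i\<le>u. (-1) ^ i * of_nat (u choose i) * (1 / of_nat (Suc i)))"
    by (simp add: harmonic_Suc sum.distrib[symmetric] algebra_simps del: of_nat_Suc)
  then show ?thesis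
    using alternating_binomial_sum_Suc[of u harmonic] alternating_binomial_sum_inverse_Suc[of u] by simp
qed

lemma alternating_binomial_sum_harmonic_minus_1:
  "u \<ge> 1 \<Longrightarrow> (\<Sum>i\<le>u. (-1) ^ i * of_nat (u choose i) * harmonic (i - 1)) = harmonic (u - 1)"
proof (induction u rule: nat_induct_at_least)
  case (Suc u)
  have "(\<Sum>i\<le>Suc u. (-1) ^ i * of_nat (Suc u choose i) * harmonic (i - 1)) =
      harmonic (u - 1) - (\<Sum>i\<le>u. (-1) ^ i * of_nat (u choose i) * harmonic i)"
    using alternating_binomial_sum_Suc[of u "\<lambda>i. harmonic (i - 1)"] Suc by simp
  also have "\<dots> = harmonic (u - 1) + 1 / of_nat u"
    using alternating_binomial_sum_harmonic[of "u - 1"] Suc by simp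
  also have "\<dots> = harmonic u"
    using Suc harmonic_Suc[of "u - 1"] by simp
  finally show ?case by simp
qed simp

lemma alternating_binomial_sum_harmonic_minus_2:
  "u \<ge> 1 \<Longrightarrow> (\<Sum>i\<le>u. (-1) ^ i * of_nat (u choose i) * harmonic (i - 2)) =
    of_nat (u - 1) - of_nat (u - 1) * harmonic (u - 1)"
proof (induction u rule: nat_induct_at_least)
  case (Suc u)
  have "(\<Sum>i\<le>Suc u. (-1) ^ i * of_nat (Suc u choose i) * harmonic (i - 2)) =
      (of_nat (u - 1) - of_nat (u - 1) * harmonic (u - 1)) -
      (\<Sum>i\<le>u. (-1) ^ i * of_nat (u choose i) * harmonic (i - 1))"
    using alternating_binomial_sum_Suc[of u "\<lambda>i. harmonic (i - 2)"] Suc by simp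
  also have "\<dots> = of_nat (u - 1) - of_nat (u - 1) * harmonic (u - 1) - harmonic (u - 1)"
    using alternating_binomial_sum_harmonic_minus_1[of u] Suc by simp
  also have "\<dots> = of_nat u - of_nat u * harmonic u"
    using Suc harmonic_Suc[of "u - 1"] by (simp add: field_simps)
  finally show ?case by simp
qed simp

section \<open>Choice of the digits\<close>

lemma p_multiple_digit_harmonic_diff_sub:
  assumes "\<And>j. j \<le> u \<Longrightarrow> p_multiple p 1 (digit_harmonic p (q - j) - v j)"
  shows "p_multiple p 1 (digit_harmonic_diff p u q - (\<Sum>j\<le>u. (-1) ^ j * of_nat (u choose j) * v j))"
proof -
  have "digit_harmonic_diff p u q - (\<Sum>j\<le>u. (-1) ^ j * of_nat (u choose j) * v j) =
      (\<Sum>j\<le>u. (-1) ^ j * of_nat (u choose j) * (digit_harmonic p (q - j) - v j))"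
    unfolding digit_harmonic_diff_def by (simp add: sum_subtractf[symmetric] algebra_simps)
  also have "p_multiple p 1 \<dots>"
  proof (intro p_multiple_sum p_multiple_mult_left assms)
    show "p_integral p ((-1) ^ j * of_nat (u choose j))" for j
      using p_integral_of_int[of p "(-1) ^ j * int (u choose j)"] by simp
  qed simp
  finally show ?thesis .
qed

text \<open>Subtracting \<open>j > t\<close> from \<open>p^e + p a + t\<close> borrows from the digit \<open>a\<close>; the new last digit
  \<open>p - (j - t)\<close> contributes \<open>H(p - (j - t)) \<equiv> H(j - t - 1)\<close>.\<close>

lemma p_multiple_digit_harmonic_borrow:
  assumes "prime p" "odd p" "e \<ge> 2" "1 \<le> a" "a \<le> p - 1" "t < j" "j - t \<le> p"
  shows "p_multiple p 1 (digit_harmonic p (p ^ e + p * a + t - j) - (1 + harmonic (a - 1) + harmonic (j - t - 1)))"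
proof -
  have p2: "p \<ge> 2" using assms(1) prime_ge_2_nat by blast
  have "p ^ e + p * a + t - j = p ^ e + p * (a - 1) + (p - (j - t))"
    using assms(4,6,7) by (cases a) (simp_all add: algebra_simps)
  then have "digit_harmonic p (p ^ e + p * a + t - j) = 1 + harmonic (a - 1) + harmonic (p - (j - t))"
    using digit_harmonic_three_digits[OF p2 assms(3), of "a - 1" "p - (j - t)"] assms(4-6) p2 by simp
  then show ?thesis
    using p_multiple_harmonic_reflect[OF assms(1,2), of "j - t"] assms(6,7) by simp
qed

lemma digit_harmonic_diff_cong_last_digit_0:
  assumes "prime p" "odd p" "1 \<le> u" "u \<le> p - 1" "e \<ge> 2" "1 \<le> a" "a \<le> p - 1"
  shows "p_multiple p 1 (digit_harmonic_diff p u (p ^ e + p * a) - (1 / of_nat a + harmonic (u - 1)))"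
proof -
  have p2: "p \<ge> 2" using assms(1) prime_ge_2_nat by blast
  have Ha: "harmonic a = harmonic (a - 1) + 1 / of_nat a"
    using assms(6) harmonic_Suc[of "a - 1"] by simp
  define v where "v j = 1 + harmonic (a - 1) + harmonic (j - 1) + (if j = 0 then 1 / of_nat a else 0)" for j
  have "p_multiple p 1 (digit_harmonic p (p ^ e + p * a - j) - v j)" if "j \<le> u" for j
  proof (cases "j = 0")
    case True
    then show ?thesis
      using digit_harmonic_three_digits[OF p2 assms(5), of a 0] assms(7) p2 Ha by (simp add: v_def)
  next
    case False
    then show ?thesis
      using p_multiple_digit_harmonic_borrow[OF assms(1,2,5,6,7), of 0 j] that assms(4) by (simp add: v_def)
  qed
  then have "p_multiple p 1
      (digit_harmonic_diff p u (p ^ e + p * a) - (\<Sum>j\<le>u. (-1) ^ j * of_nat (u choose j) * v j))"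
    by (rule p_multiple_digit_harmonic_diff_sub)
  moreover have "(\<Sum>j\<le>u. (-1) ^ j * of_nat (u choose j) * v j) =
      (\<Sum>j\<le>u. (-1) ^ j * of_nat (u choose j) * (1 + harmonic (a - 1))) +
      (\<Sum>j\<le>u. (-1) ^ j * of_nat (u choose j) * harmonic (j - 1)) +
      (\<Sum>j\<le>u. (-1) ^ j * of_nat (u choose j) * (if j = 0 then 1 / of_nat a else 0))"
    unfolding v_def by (simp add: sum.distrib[symmetric] algebra_simps)
  then have "(\<Sum>j\<le>u. (-1) ^ j * of_nat (u choose j) * v j) = 1 / of_nat a + harmonic (u - 1)"
    unfolding alternating_binomial_sum_const[OF assms(3)] alternating_binomial_sum_harmonic_minus_1[OF assms(3)]
      alternating_binomial_sum_first by simp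
  ultimately show ?thesis by simp
qed

lemma digit_harmonic_diff_cong_last_digit_1:
  assumes "prime p" "odd p" "1 \<le> u" "u \<le> p - 1" "e \<ge> 2" "1 \<le> a" "a \<le> p - 1"
  shows "p_multiple p 1 (digit_harmonic_diff p u (p ^ e + p * a + 1) -
    (of_nat u - of_nat (u - 1) * harmonic (u - 1) + (1 - of_nat u) / of_nat a))"
proof -
  have p2: "p \<ge> 2" using assms(1) prime_ge_2_nat by blast
  have Ha: "harmonic a = harmonic (a - 1) + 1 / of_nat a"
    using assms(6) harmonic_Suc[of "a - 1"] by simp
  define v where "v j = 1 + harmonic (a - 1) + harmonic (j - 2) +
    (if j = 0 then 1 + 1 / of_nat a else if j = 1 then 1 / of_nat a else 0)" for j
  have "p_multiple p 1 (digit_harmonic p (p ^ e + p * a + 1 - j) - v j)" if "j \<le> u" for j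
  proof (cases "j \<le> 1")
    case True
    then consider "j = 0" | "j = 1" by linarith
    then show ?thesis
    proof cases
      case 1
      then show ?thesis
        using digit_harmonic_three_digits[OF p2 assms(5), of a 1] assms(7) p2 Ha
        by (simp add: v_def harmonic_Suc[of 0])
    next
      case 2
      then show ?thesis
        using digit_harmonic_three_digits[OF p2 assms(5), of a 0] assms(7) p2 Ha by (simp add: v_def)
    qed
  next
    case False
    then show ?thesis
      using p_multiple_digit_harmonic_borrow[OF assms(1,2,5,6,7), of 1 j] that assms(4)
      by (simp add: v_def numeral_2_eq_2)
  qed
  then have diff: "p_multiple p 1
      (digit_harmonic_diff p u (p ^ e + p * a + 1) - (\<Sum>j\<le>u. (-1) ^ j * of_nat (u choose j) * v j))"
    by (rule p_multiple_digit_harmonic_diff_sub)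
  have "(\<Sum>j\<le>u. (-1) ^ j * of_nat (u choose j) * v j) =
      (\<Sum>j\<le>u. (-1) ^ j * of_nat (u choose j) * (1 + harmonic (a - 1))) +
      (\<Sum>j\<le>u. (-1) ^ j * of_nat (u choose j) * harmonic (j - 2)) +
      (\<Sum>j\<le>u. (-1) ^ j * of_nat (u choose j) *
        (if j = 0 then 1 + 1 / of_nat a else if j = 1 then 1 / of_nat a else 0))"
    unfolding v_def by (simp add: sum.distrib[symmetric] algebra_simps)
  then have "(\<Sum>j\<le>u. (-1) ^ j * of_nat (u choose j) * v j) =
      of_nat (u - 1) - of_nat (u - 1) * harmonic (u - 1) + (1 + 1 / of_nat a - of_nat u * (1 / of_nat a))"
    unfolding alternating_binomial_sum_const[OF assms(3)] alternating_binomial_sum_harmonic_minus_2[OF assms(3)]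
      alternating_binomial_sum_first_two[OF assms(3)] by simp
  also have "\<dots> = of_nat u - of_nat (u - 1) * harmonic (u - 1) + (1 - of_nat u) / of_nat a"
    using assms(3) by (simp add: diff_divide_distrib)
  finally show ?thesis using diff by simp
qed

lemma exists_digit_dvd_linear:
  fixes x y :: int
  assumes "prime p" "\<not> int p dvd x" "\<not> int p dvd y"
  obtains a where "1 \<le> a" "a \<le> p - 1" "int p dvd x * int a + y"
proof -
  have "coprime (int p) x" using assms by (simp add: prime_imp_coprime)
  then obtain s t where st: "s * x + t * int p = 1"
    using bezout_int[of x "int p"] by (auto simp: coprime_iff_gcd_eq_1 gcd.commute)
  define r where "r = (- y * s) mod int p"
  have "p > 0" using assms(1) prime_gt_0_nat by blast
  have e1: "r - (- y * s) = - (int p * ((- y * s) div int p))"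
    using minus_mod_eq_mult_div[of "- y * s" "int p"] unfolding r_def by linarith
  have e2: "1 - s * x = t * int p" using st by linarith
  have "x * r + y = x * (r - (- y * s)) + y * (1 - s * x)"
    by (simp add: algebra_simps)
  also have "\<dots> = int p * (y * t - x * ((- y * s) div int p))"
    unfolding e1 e2 by (simp add: algebra_simps)
  finally have dvd: "int p dvd x * r + y" by simp
  then have "r \<noteq> 0" using assms(3) by auto
  moreover have "0 \<le> r" "r < int p" using \<open>p > 0\<close> by (simp_all add: r_def)
  ultimately show ?thesis
    using that[of "nat r"] dvd by simp
qed

lemma exists_digit_p_multiple_add_divide:
  assumes "prime p" "p_integral p x" "p_integral p y" "\<not> p_multiple p 1 x" "\<not> p_multiple p 1 y"
  obtains a where "1 \<le> a" "a \<le> p - 1" "p_multiple p 1 (x + y / of_nat a)"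
proof -
  have unit: "\<not> int p dvd c"
    if z: "\<not> p_multiple p 1 z" "z = of_int c / of_int b" and b: "b \<noteq> 0" "coprime b (int p)" for z c b
  proof
    assume "int p dvd c"
    then obtain k where "c = int p * k" ..
    then have "z = of_nat p * (of_int k / of_int b)" using z(2) by simp
    moreover have "p_integral p (of_int k / of_int b)" unfolding p_integral_def using b by blast
    ultimately show False using z(1) unfolding p_multiple_def by auto
  qed
  obtain X B Y C where XB: "B \<noteq> 0" "coprime B (int p)" "x = of_int X / of_int B"
    and YC: "C \<noteq> 0" "coprime C (int p)" "y = of_int Y / of_int C"
    using assms(2,3) unfolding p_integral_def by blast
  have "prime (int p)" using assms(1) by simp
  then have "\<not> int p dvd B" "\<not> int p dvd C"
    using coprime_common_divisor[OF XB(2) _ dvd_refl] coprime_common_divisor[OF YC(2) _ dvd_refl]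
      not_prime_unit by blast+
  then have "\<not> int p dvd X * C" "\<not> int p dvd Y * B"
    using unit[OF assms(4) XB(3,1,2)] unit[OF assms(5) YC(3,1,2)]
    by (simp_all add: prime_dvd_mult_iff[OF \<open>prime (int p)\<close>])
  then obtain a where a: "1 \<le> a" "a \<le> p - 1" "int p dvd X * C * int a + Y * B"
    using exists_digit_dvd_linear[OF assms(1)] by blast
  then obtain k where k: "X * C * int a + Y * B = int p * k" by blast
  have "coprime (int a) (int p)"
    using a prime_gt_0_nat[OF assms(1)] by (intro coprime_less_prime[OF assms(1)]) auto
  then have "p_integral p (of_int k / of_int (B * C * int a))"
    unfolding p_integral_def using XB YC a by (intro exI[of _ k] exI[of _ "B * C * int a"]) auto
  moreover have "x + y / of_nat a = of_int (X * C * int a + Y * B) / of_int (B * C * int a)"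
    unfolding XB(3) YC(3) using XB(1) YC(1) a(1) by (simp add: field_simps)
  ultimately have "p_multiple p 1 (x + y / of_nat a)"
    unfolding p_multiple_def k by (intro exI[of _ "of_int k / of_int (B * C * int a)"]) simp
  then show ?thesis using that[OF a(1,2)] by blast
qed

lemma exists_digit_last_digit_0:
  assumes "prime p" "odd p" "1 \<le> u" "u \<le> p - 1" "\<not> p_multiple p 1 (harmonic (u - 1))"
  obtains a where "1 \<le> a" "a \<le> p - 1"
    "\<And>e. e \<ge> 2 \<Longrightarrow> p_multiple p 1 (digit_harmonic_diff p u (p ^ e + p * a))"
proof -
  have "p_integral p (harmonic (u - 1))"
    using p_integral_harmonic[OF assms(1), of "u - 1"] assms(3,4) by simp
  moreover have "\<not> p_multiple p 1 1"
    using not_p_multiple_of_nat[OF assms(1), of 1] assms(3,4) by simp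
  ultimately obtain a where a: "1 \<le> a" "a \<le> p - 1" "p_multiple p 1 (harmonic (u - 1) + 1 / of_nat a)"
    using exists_digit_p_multiple_add_divide[OF assms(1) _ p_integral_1 assms(5)] by blast
  have "p_multiple p 1 (digit_harmonic_diff p u (p ^ e + p * a))" if "e \<ge> 2" for e
    using p_multiple_add[OF digit_harmonic_diff_cong_last_digit_0[OF assms(1-4) that a(1,2)] a(3)]
    by (simp add: add.commute)
  then show ?thesis using that[OF a(1,2)] by blast
qed

lemma exists_digit_last_digit_1:
  assumes "prime p" "odd p" "2 \<le> u" "u \<le> p - 1" "p_multiple p 1 (harmonic (u - 1))"
  obtains a where "1 \<le> a" "a \<le> p - 1"
    "\<And>e. e \<ge> 2 \<Longrightarrow> p_multiple p 1 (digit_harmonic_diff p u (p ^ e + p * a + 1))"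
proof -
  define x y where "x = of_nat u - of_nat (u - 1) * harmonic (u - 1)" and "y = 1 - (of_nat u :: rat)"
  have "u < p" using assms(4) prime_gt_0_nat[OF assms(1)] by linarith
  have "\<not> p_multiple p 1 x"
  proof
    assume "p_multiple p 1 x"
    moreover have "p_multiple p 1 (of_nat (u - 1) * harmonic (u - 1))"
      using assms(5) by (intro p_multiple_mult_left) simp_all
    ultimately have "p_multiple p 1 (of_nat u)" unfolding x_def by (metis diff_add_cancel p_multiple_add)
    then show False using not_p_multiple_of_nat[OF assms(1)] assms(3) \<open>u < p\<close> by simp
  qed
  moreover have "\<not> p_multiple p 1 y"
  proof
    assume "p_multiple p 1 y"
    then have "p_multiple p 1 (of_nat (u - 1))"
      using p_multiple_uminus[of p 1 y] assms(3) unfolding y_def by simp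
    then show False using not_p_multiple_of_nat[OF assms(1), of "u - 1"] assms(3) \<open>u < p\<close> by linarith
  qed
  moreover have "p_integral p x"
    unfolding x_def using p_integral_harmonic[OF assms(1), of "u - 1"] \<open>u < p\<close>
    by (intro p_integral_diff p_integral_mult p_integral_of_nat) simp
  moreover have "p_integral p y"
    unfolding y_def by (rule p_integral_diff) simp_all
  ultimately obtain a where a: "1 \<le> a" "a \<le> p - 1" "p_multiple p 1 (x + y / of_nat a)"
    using exists_digit_p_multiple_add_divide[OF assms(1) \<open>p_integral p x\<close> \<open>p_integral p y\<close>] by blast
  have "1 \<le> u" using assms(3) by simp
  have "p_multiple p 1 (digit_harmonic_diff p u (p ^ e + p * a + 1))" if "e \<ge> 2" for e
    using p_multiple_add[OF digit_harmonic_diff_cong_last_digit_1[OF assms(1,2) \<open>1 \<le> u\<close> assms(4) that a(1,2)]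
        a(3)]
    unfolding x_def y_def by simp
  then show ?thesis using that[OF a(1,2)] by blast
qed

lemma exists_digits_digit_harmonic_diff_p_multiple:
  assumes "prime p" "odd p" "2 \<le> u" "u \<le> p - 1"
  obtains a t where "1 \<le> a" "a \<le> p - 1" "t \<le> 1"
    "\<And>e. e \<ge> 2 \<Longrightarrow> p_multiple p 1 (digit_harmonic_diff p u (p ^ e + p * a + t))"
proof (cases "p_multiple p 1 (harmonic (u - 1))")
  case False
  have "1 \<le> u" using assms(3) by simp
  obtain a where "1 \<le> a" "a \<le> p - 1"
    "\<And>e. e \<ge> 2 \<Longrightarrow> p_multiple p 1 (digit_harmonic_diff p u (p ^ e + p * a))"
    using exists_digit_last_digit_0[OF assms(1,2) \<open>1 \<le> u\<close> assms(4) False] by blast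
  then show ?thesis using that[of a 0] by simp
next
  case True
  obtain a where "1 \<le> a" "a \<le> p - 1"
    "\<And>e. e \<ge> 2 \<Longrightarrow> p_multiple p 1 (digit_harmonic_diff p u (p ^ e + p * a + 1))"
    using exists_digit_last_digit_1[OF assms True] by blast
  then show ?thesis using that[of a 1] by simp
qed

lemma nu_ge_of_dvd:
  assumes "prime p" "int p ^ k dvd x" shows "nu p x \<ge> enat k"
  unfolding nu_def using assms by (auto intro: multiplicity_geI)

theorem theorem3p1:
  fixes p u s :: nat
  assumes "prime p" and "p \<ge> 3" and "u \<in> {2..p-1}" and "s \<ge> 1"
  shows "infinite {n::nat. nu p (A p ((p - 1) * (u * p ^ s - 1)) n) \<ge> 2}"
proof -
  have "odd p" using assms(1,2) prime_odd_nat by simp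
  obtain a t where "1 \<le> a" "a \<le> p - 1" "t \<le> 1"
    and diff: "\<And>e. e \<ge> 2 \<Longrightarrow> p_multiple p 1 (digit_harmonic_diff p u (p ^ e + p * a + t))"
    using exists_digits_digit_harmonic_diff_p_multiple[OF assms(1) \<open>odd p\<close>] assms(3) by auto
  define n where "n e = p ^ s * (p ^ (e + 2) + p * a + t)" for e
  have "int p ^ 2 dvd A p ((p - 1) * (u * p ^ s - 1)) (n e)" for e
  proof -
    have "p \<le> p ^ (e + 2)" by (rule self_le_power) (use assms(2) in simp_all)
    moreover have "2 \<le> u" "u \<le> p - 1" using assms(3) by simp_all
    ultimately have "1 \<le> u" "u \<le> p ^ (e + 2) + p * a + t" by linarith+
    then show ?thesis
      unfolding n_def using p_squared_dvd_A[OF assms(1) \<open>odd p\<close> _ _ assms(4) diff[of "e + 2"]] by simp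
  qed
  then have "range n \<subseteq> {n. nu p (A p ((p - 1) * (u * p ^ s - 1)) n) \<ge> 2}"
    using nu_ge_of_dvd[OF assms(1), of 2] by (auto simp: numeral_eq_enat)
  moreover have "strict_mono n"
    unfolding strict_mono_def n_def using assms(2) by (auto intro!: power_strict_increasing)
  ultimately show ?thesis
    using range_inj_infinite strict_mono_imp_inj_on infinite_super by blast
qed

end
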